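(* Let $\alpha:U\to V$ be a surjective h-transmission between commutative supertropical monoids, and assume that $U$ is a semiring. Then $V$ is a semiring.
   Context: All monoids are commutative. A supertropical monoid is a monoid $(U,\cdot)$ with absorbing element $0$ and distinguished idempotent $e$ with $ex=0\Rightarrow x=0$, together with a total ordering on $eU$, compatible with multiplication and with $0$ least, making $eU$ a bipotent semiring (addition $=\max$). Define $x+y:=y$ if $ex<ey$, $x$ if $ex>ey$, $ex$ if $ex=ey$; $U$ is a semiring if this addition is associative and distributive. A transmission $\alpha:U\to V$ is a map with $\alpha(0)=0$, $\alpha(1)=1$, multiplicative, $\alpha(e_U)=e_V$, order-preserving on $eU$. An h-transmission is a transmission such that for all $x,y\in U$: if $ex<ey$ and $\alpha(ex)=\alpha(ey)$, then $\alpha(y)\in eV$. *)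

theory Defs
  imports Main
begin

text \<open>A commutative supertropical monoid is represented on a whole type 'a, with
  multiplication mul, unit one, absorbing element zero, distinguished idempotent e,
  and a relation le which is a total order on eU = {mul e x | x}.\<close>

definition ghost :: "('a \<Rightarrow> 'a \<Rightarrow> 'a) \<Rightarrow> 'a \<Rightarrow> 'a set" where
  "ghost mul e = {mul e x | x. True}"

definition supertropical_monoid ::
  "('a \<Rightarrow> 'a \<Rightarrow> 'a) \<Rightarrow> 'a \<Rightarrow> 'a \<Rightarrow> 'a \<Rightarrow> ('a \<Rightarrow> 'a \<Rightarrow> bool) \<Rightarrow> bool" where
  "supertropical_monoid mul one zero e le \<longleftrightarrow>
     (\<forall>x y z. mul (mul x y) z = mul x (mul y z)) \<and>
     (\<forall>x y. mul x y = mul y x) \<and>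
     (\<forall>x. mul one x = x) \<and>
     (\<forall>x. mul zero x = zero) \<and>
     mul e e = e \<and>
     (\<forall>x. mul e x = zero \<longrightarrow> x = zero) \<and>
     \<comment> \<open>le is a total order on eU\<close>
     (\<forall>a\<in>ghost mul e. le a a) \<and>
     (\<forall>a\<in>ghost mul e. \<forall>b\<in>ghost mul e. le a b \<and> le b a \<longrightarrow> a = b) \<and>
     (\<forall>a\<in>ghost mul e. \<forall>b\<in>ghost mul e. \<forall>c\<in>ghost mul e. le a b \<and> le b c \<longrightarrow> le a c) \<and>
     (\<forall>a\<in>ghost mul e. \<forall>b\<in>ghost mul e. le a b \<or> le b a) \<and>
     \<comment> \<open>compatible with multiplication\<close>
     (\<forall>a\<in>ghost mul e. \<forall>b\<in>ghost mul e. \<forall>c\<in>ghost mul e. le a b \<longrightarrow> le (mul a c) (mul b c)) \<and>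
     \<comment> \<open>0 is least\<close>
     (\<forall>a\<in>ghost mul e. le zero a)"

definition lt_of :: "('a \<Rightarrow> 'a \<Rightarrow> bool) \<Rightarrow> 'a \<Rightarrow> 'a \<Rightarrow> bool" where
  "lt_of le a b \<longleftrightarrow> le a b \<and> a \<noteq> b"

definition st_add :: "('a \<Rightarrow> 'a \<Rightarrow> 'a) \<Rightarrow> 'a \<Rightarrow> ('a \<Rightarrow> 'a \<Rightarrow> bool) \<Rightarrow> 'a \<Rightarrow> 'a \<Rightarrow> 'a" where
  "st_add mul e le x y =
     (if lt_of le (mul e x) (mul e y) then y
      else if lt_of le (mul e y) (mul e x) then x
      else mul e x)"

definition st_semiring :: "('a \<Rightarrow> 'a \<Rightarrow> 'a) \<Rightarrow> 'a \<Rightarrow> ('a \<Rightarrow> 'a \<Rightarrow> bool) \<Rightarrow> bool" where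
  "st_semiring mul e le \<longleftrightarrow>
     (\<forall>x y z. st_add mul e le (st_add mul e le x y) z = st_add mul e le x (st_add mul e le y z)) \<and>
     (\<forall>x y z. mul x (st_add mul e le y z) = st_add mul e le (mul x y) (mul x z))"

definition transmission ::
  "('a \<Rightarrow> 'a \<Rightarrow> 'a) \<Rightarrow> 'a \<Rightarrow> 'a \<Rightarrow> 'a \<Rightarrow> ('a \<Rightarrow> 'a \<Rightarrow> bool) \<Rightarrow>
   ('b \<Rightarrow> 'b \<Rightarrow> 'b) \<Rightarrow> 'b \<Rightarrow> 'b \<Rightarrow> 'b \<Rightarrow> ('b \<Rightarrow> 'b \<Rightarrow> bool) \<Rightarrow> ('a \<Rightarrow> 'b) \<Rightarrow> bool" where
  "transmission mulU oneU zeroU eU leU mulV oneV zeroV eV leV \<alpha> \<longleftrightarrow>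
     \<alpha> zeroU = zeroV \<and> \<alpha> oneU = oneV \<and>
     (\<forall>x y. \<alpha> (mulU x y) = mulV (\<alpha> x) (\<alpha> y)) \<and>
     \<alpha> eU = eV \<and>
     (\<forall>a\<in>ghost mulU eU. \<forall>b\<in>ghost mulU eU. leU a b \<longrightarrow> leV (\<alpha> a) (\<alpha> b))"

definition h_transmission ::
  "('a \<Rightarrow> 'a \<Rightarrow> 'a) \<Rightarrow> 'a \<Rightarrow> 'a \<Rightarrow> 'a \<Rightarrow> ('a \<Rightarrow> 'a \<Rightarrow> bool) \<Rightarrow>
   ('b \<Rightarrow> 'b \<Rightarrow> 'b) \<Rightarrow> 'b \<Rightarrow> 'b \<Rightarrow> 'b \<Rightarrow> ('b \<Rightarrow> 'b \<Rightarrow> bool) \<Rightarrow> ('a \<Rightarrow> 'b) \<Rightarrow> bool" where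
  "h_transmission mulU oneU zeroU eU leU mulV oneV zeroV eV leV \<alpha> \<longleftrightarrow>
     transmission mulU oneU zeroU eU leU mulV oneV zeroV eV leV \<alpha> \<and>
     (\<forall>x y. lt_of leU (mulU eU x) (mulU eU y) \<and> \<alpha> (mulU eU x) = \<alpha> (mulU eU y)
        \<longrightarrow> \<alpha> y \<in> ghost mulV eV)"

end

theory Submission
  imports Defs
begin

text \<open>An h-transmission preserves the supertropical addition: where the order of
  ghost values is preserved strictly this is monotonicity, and where two strictly
  ordered ghost values of U collapse in V, the h-condition makes the image of the
  larger summand a ghost, which is exactly what the addition of V returns.
  The semiring laws then transfer along the surjection.\<close>

lemma ghost_mul_e:
  assumes "supertropical_monoid mul one zero e le" and "w \<in> ghost mul e"
  shows "mul e w = w"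
proof -
  obtain x where "w = mul e x" using assms(2) unfolding ghost_def by auto
  moreover have "mul (mul e e) x = mul e (mul e x)" and "mul e e = e"
    using assms(1) unfolding supertropical_monoid_def by blast+
  ultimately show ?thesis by simp
qed

lemma st_add_commute:
  assumes "supertropical_monoid mul one zero e le"
  shows "st_add mul e le x y = st_add mul e le y x"
proof -
  have gx: "mul e x \<in> ghost mul e" and gy: "mul e y \<in> ghost mul e"
    unfolding ghost_def by auto
  have tot: "le (mul e x) (mul e y) \<or> le (mul e y) (mul e x)"
    and antisym: "le (mul e x) (mul e y) \<Longrightarrow> le (mul e y) (mul e x) \<Longrightarrow> mul e x = mul e y"
    using assms gx gy unfolding supertropical_monoid_def by blast+
  consider "lt_of le (mul e x) (mul e y)" | "lt_of le (mul e y) (mul e x)" | "mul e x = mul e y"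
    using tot unfolding lt_of_def by fastforce
  then show ?thesis
  proof cases
    case 1
    then have "\<not> lt_of le (mul e y) (mul e x)"
      using antisym unfolding lt_of_def by blast
    with 1 show ?thesis unfolding st_add_def by simp
  next
    case 2
    then have "\<not> lt_of le (mul e x) (mul e y)"
      using antisym unfolding lt_of_def by blast
    with 2 show ?thesis unfolding st_add_def by simp
  qed (simp add: st_add_def lt_of_def)
qed

lemma transmission_mul_e:
  assumes "transmission mulU oneU zeroU eU leU mulV oneV zeroV eV leV \<alpha>"
  shows "\<alpha> (mulU eU x) = mulV eV (\<alpha> x)"
  using assms unfolding transmission_def by simp

lemma h_transmission_st_add_strict:
  assumes V: "supertropical_monoid mulV oneV zeroV eV leV"
    and H: "h_transmission mulU oneU zeroU eU leU mulV oneV zeroV eV leV \<alpha>"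
    and lt: "lt_of leU (mulU eU x) (mulU eU y)"
  shows "\<alpha> (st_add mulU eU leU x y) = st_add mulV eV leV (\<alpha> x) (\<alpha> y)"
proof -
  have T: "transmission mulU oneU zeroU eU leU mulV oneV zeroV eV leV \<alpha>"
    using H unfolding h_transmission_def by simp
  have sum: "st_add mulU eU leU x y = y"
    using lt unfolding st_add_def by simp
  have "leV (\<alpha> (mulU eU x)) (\<alpha> (mulU eU y))"
    using T lt unfolding transmission_def lt_of_def ghost_def by blast
  then have le: "leV (mulV eV (\<alpha> x)) (mulV eV (\<alpha> y))"
    by (simp add: transmission_mul_e[OF T])
  show ?thesis
  proof (cases "mulV eV (\<alpha> x) = mulV eV (\<alpha> y)")
    case False
    then show ?thesis using le sum unfolding st_add_def lt_of_def by simp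
  next
    case True
    then have "\<alpha> (mulU eU x) = \<alpha> (mulU eU y)"
      by (simp add: transmission_mul_e[OF T])
    then have "\<alpha> y \<in> ghost mulV eV"
      using H lt unfolding h_transmission_def by blast
    then have "mulV eV (\<alpha> y) = \<alpha> y"
      by (rule ghost_mul_e[OF V])
    with True sum show ?thesis unfolding st_add_def lt_of_def by simp
  qed
qed

lemma h_transmission_st_add:
  assumes U: "supertropical_monoid mulU oneU zeroU eU leU"
    and V: "supertropical_monoid mulV oneV zeroV eV leV"
    and H: "h_transmission mulU oneU zeroU eU leU mulV oneV zeroV eV leV \<alpha>"
  shows "\<alpha> (st_add mulU eU leU x y) = st_add mulV eV leV (\<alpha> x) (\<alpha> y)"
proof -
  have "mulU eU x \<in> ghost mulU eU" and "mulU eU y \<in> ghost mulU eU"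
    unfolding ghost_def by auto
  then have "leU (mulU eU x) (mulU eU y) \<or> leU (mulU eU y) (mulU eU x)"
    using U unfolding supertropical_monoid_def by blast
  then consider "lt_of leU (mulU eU x) (mulU eU y)" | "lt_of leU (mulU eU y) (mulU eU x)"
    | "mulU eU x = mulU eU y"
    unfolding lt_of_def by fastforce
  then show ?thesis
  proof cases
    case 1
    then show ?thesis by (rule h_transmission_st_add_strict[OF V H])
  next
    case 2
    then show ?thesis
      using h_transmission_st_add_strict[OF V H]
      by (simp add: st_add_commute[OF U, of x y] st_add_commute[OF V, of "\<alpha> x" "\<alpha> y"])
  next
    case 3
    have T: "transmission mulU oneU zeroU eU leU mulV oneV zeroV eV leV \<alpha>"
      using H unfolding h_transmission_def by simp
    from 3 have "mulV eV (\<alpha> x) = mulV eV (\<alpha> y)"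
      by (metis transmission_mul_e[OF T])
    with 3 show ?thesis
      by (simp add: st_add_def lt_of_def transmission_mul_e[OF T])
  qed
qed

lemma st_semiring_surj_image:
  assumes "st_semiring mulU eU leU" and "surj \<alpha>"
    and mul: "\<And>x y. \<alpha> (mulU x y) = mulV (\<alpha> x) (\<alpha> y)"
    and add: "\<And>x y. \<alpha> (st_add mulU eU leU x y) = st_add mulV eV leV (\<alpha> x) (\<alpha> y)"
  shows "st_semiring mulV eV leV"
  unfolding st_semiring_def
proof (intro conjI allI)
  fix x y z
  obtain a b c where abc: "x = \<alpha> a" "y = \<alpha> b" "z = \<alpha> c"
    using \<open>surj \<alpha>\<close> by (metis surj_def)
  show "st_add mulV eV leV (st_add mulV eV leV x y) z = st_add mulV eV leV x (st_add mulV eV leV y z)"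
    using assms(1) unfolding abc st_semiring_def by (simp only: add[symmetric])
  show "mulV x (st_add mulV eV leV y z) = st_add mulV eV leV (mulV x y) (mulV x z)"
    using assms(1) unfolding abc st_semiring_def by (simp only: add[symmetric] mul[symmetric])
qed

theorem theorem5p7:
  fixes mulU :: "'a \<Rightarrow> 'a \<Rightarrow> 'a" and oneU zeroU eU :: 'a and leU :: "'a \<Rightarrow> 'a \<Rightarrow> bool"
    and mulV :: "'b \<Rightarrow> 'b \<Rightarrow> 'b" and oneV zeroV eV :: 'b and leV :: "'b \<Rightarrow> 'b \<Rightarrow> bool"
    and \<alpha> :: "'a \<Rightarrow> 'b"
  assumes "supertropical_monoid mulU oneU zeroU eU leU"
    and "supertropical_monoid mulV oneV zeroV eV leV"
    and "h_transmission mulU oneU zeroU eU leU mulV oneV zeroV eV leV \<alpha>"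
    and "surj \<alpha>"
    and "st_semiring mulU eU leU"
  shows "st_semiring mulV eV leV"
proof (rule st_semiring_surj_image[OF assms(5,4)])
  show "\<alpha> (mulU x y) = mulV (\<alpha> x) (\<alpha> y)" for x y
    using assms(3) unfolding h_transmission_def transmission_def by simp
  show "\<alpha> (st_add mulU eU leU x y) = st_add mulV eV leV (\<alpha> x) (\<alpha> y)" for x y
    by (rule h_transmission_st_add[OF assms(1,2,3)])
qed

end
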